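(* Let $k\ge2$ and let $G,H$ be connected graphs. Let $w\in V(G)$ and $w'\in V(H)$ be vertices such that $G-\{w\}$ is connected and $H-\{w'\}$ is disconnected. Then $\chi^k_G(w)\ne\chi^k_H(w')$.
   Context: Graphs are finite, simple, undirected (possibly colored; uncolored graphs are monochromatic). For $k\ge2$, the $k$-dimensional Weisfeiler–Leman algorithm computes a coloring of $V(G)^k$: the initial color of a tuple consists of its input color and the isomorphism type of the ordered induced subgraph on its entries; in each round the new color of $\bar v$ is the pair of its old color and the multiset, over $w\in V(G)$, of the $k$-tuples whose $i$-th component is the old color of $\bar v$ with its $i$-th entry replaced by $w$; the stable coloring is $\chi^k_G$, with canonical colors comparable across graphs. For a vertex $w$, $\chi^k_G(w):=\chi^k_G(w,\dots,w)$. *)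

theory Defs
  imports Main "HOL-Library.Multiset"
begin

definition simple_graph :: "'a set \<Rightarrow> ('a \<Rightarrow> 'a \<Rightarrow> bool) \<Rightarrow> bool" where
  "simple_graph V E \<longleftrightarrow> finite V \<and> (\<forall>x y. E x y \<longrightarrow> x \<in> V \<and> y \<in> V)
     \<and> (\<forall>x y. E x y \<longrightarrow> E y x) \<and> (\<forall>x. \<not> E x x)"

definition connected_on :: "'a set \<Rightarrow> ('a \<Rightarrow> 'a \<Rightarrow> bool) \<Rightarrow> bool" where
  "connected_on S E \<longleftrightarrow> S \<noteq> {} \<and>
     (\<forall>x\<in>S. \<forall>y\<in>S. (\<lambda>u v. E u v \<and> u \<in> S \<and> v \<in> S)\<^sup>*\<^sup>* x y)"

text \<open>Canonical Weisfeiler--Leman colours (comparable across graphs).\<close>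
datatype 'c wlcol =
    WLInit "'c list" "(bool \<times> bool) list list"
  | WLRefine "'c wlcol" "'c wlcol list multiset"

fun wl :: "'a set \<Rightarrow> ('a \<Rightarrow> 'a \<Rightarrow> bool) \<Rightarrow> ('a \<Rightarrow> 'c) \<Rightarrow> nat \<Rightarrow> 'a list \<Rightarrow> 'c wlcol" where
  "wl V E col 0 vs = WLInit (map col vs) (map (\<lambda>x. map (\<lambda>y. (x = y, E x y)) vs) vs)"
| "wl V E col (Suc t) vs = WLRefine (wl V E col t vs)
     (image_mset (\<lambda>w. map (\<lambda>i. wl V E col t (vs[i := w])) [0..<length vs]) (mset_set V))"

text \<open>Equality of stable k-WL colours of vertices w (in G) and w' (in H):
  the canonical colours agree in every round (equivalently, the stable colours
  agree, e.g. computed on the disjoint union).\<close>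
definition same_wl_vertex_color ::
  "nat \<Rightarrow> 'a set \<Rightarrow> ('a \<Rightarrow> 'a \<Rightarrow> bool) \<Rightarrow> ('a \<Rightarrow> 'c) \<Rightarrow> 'a
       \<Rightarrow> 'b set \<Rightarrow> ('b \<Rightarrow> 'b \<Rightarrow> bool) \<Rightarrow> ('b \<Rightarrow> 'c) \<Rightarrow> 'b \<Rightarrow> bool" where
  "same_wl_vertex_color k V E c w V' E' c' w' \<longleftrightarrow>
     (\<forall>t. wl V E c t (replicate k w) = wl V' E' c' t (replicate k w'))"

end

theory Submission
  imports Defs
begin

text \<open>Equal k-WL colours, k \<ge> 2, force equal numbers of walks of every length between
  corresponding entries of corresponding tuples, and every vertex of H can be answered by a
  vertex of G that extends the correspondence of tuples. Take p, q in different components of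
  H - w' and answering vertices y, x of G - w. Splitting every walk at its first visit to the
  cut vertex (renewal equation) shows that the number of walks avoiding w' is determined by
  walk counts between p, q and w'; hence G - w has no walk from y to x, although it is
  connected. The degenerate case H = {w'} is excluded by counting vertices in round one.\<close>

fun walks :: "'a set \<Rightarrow> ('a \<Rightarrow> 'a \<Rightarrow> bool) \<Rightarrow> nat \<Rightarrow> 'a \<Rightarrow> 'a \<Rightarrow> nat" where
  "walks V E 0 a b = (if a = b then 1 else 0)"
| "walks V E (Suc l) a b = (\<Sum>z\<in>V. if E a z then walks V E l z b else 0)"

text \<open>Number of walks of length l from a that visit w exactly once, at their last step.\<close>
fun first_visit_walks :: "'a set \<Rightarrow> ('a \<Rightarrow> 'a \<Rightarrow> bool) \<Rightarrow> 'a \<Rightarrow> nat \<Rightarrow> 'a \<Rightarrow> nat" where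
  "first_visit_walks V E w 0 a = 0"
| "first_visit_walks V E w (Suc l) a = (if E a w \<and> l = 0 then 1 else 0)
     + (\<Sum>z\<in>V-{w}. if E a z then first_visit_walks V E w l z else 0)"

lemma walks_to_outside_eq_0:
  assumes "w \<notin> S" "a \<noteq> w"
  shows "walks S E l a w = 0"
  using assms(2)
proof (induction l arbitrary: a)
  case (Suc l)
  have "walks S E l z w = 0" if "z \<in> S" for z
    by (metis Suc.IH that assms(1))
  then show ?case by (auto intro!: sum.neutral)
qed simp

lemma walks_first_visit_decomp:
  assumes "finite V" "w \<in> V" "a \<noteq> w"
  shows "walks V E l a b = walks (V-{w}) E l a b
           + (\<Sum>j\<le>l. first_visit_walks V E w j a * walks V E (l-j) w b)"
  using assms(3)
proof (induction l arbitrary: a)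
  case 0
  then show ?case by simp
next
  case (Suc l)
  let ?F = "\<lambda>j. \<Sum>z\<in>V-{w}. if E a z then first_visit_walks V E w j z else 0"
  let ?W = "\<lambda>j. walks V E (l-j) w b"
  have "walks V E (Suc l) a b = (if E a w then walks V E l w b else 0)
      + (\<Sum>z\<in>V-{w}. if E a z then walks V E l z b else 0)"
    using assms(1,2) by (simp add: sum.remove)
  also have "(\<Sum>z\<in>V-{w}. if E a z then walks V E l z b else 0)
      = (\<Sum>z\<in>V-{w}. (if E a z then walks (V-{w}) E l z b else 0)
           + (\<Sum>j\<le>l. (if E a z then first_visit_walks V E w j z else 0) * ?W j))"
    using Suc.IH by (intro sum.cong) auto
  also have "\<dots> = walks (V-{w}) E (Suc l) a b + (\<Sum>j\<le>l. ?F j * ?W j)"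
    by (simp add: sum.distrib sum_distrib_right sum.swap[of _ "V-{w}"])
  finally have lhs: "walks V E (Suc l) a b = (if E a w then walks V E l w b else 0)
      + walks (V-{w}) E (Suc l) a b + (\<Sum>j\<le>l. ?F j * ?W j)"
    by simp
  have "(\<Sum>j\<le>Suc l. first_visit_walks V E w j a * walks V E (Suc l-j) w b)
      = (\<Sum>j\<le>l. first_visit_walks V E w (Suc j) a * ?W j)"
    by (subst sum.atMost_Suc_shift) simp
  also have "\<dots> = (\<Sum>j\<le>l. if E a w \<and> j = 0 then ?W j else 0) + (\<Sum>j\<le>l. ?F j * ?W j)"
    by (auto simp: sum.distrib[symmetric] distrib_right intro!: sum.cong)
  also have "(\<Sum>j\<le>l. if E a w \<and> j = 0 then ?W j else 0) = (if E a w then walks V E l w b else 0)"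
    by simp
  finally show ?case
    using lhs by simp
qed

text \<open>Strong induction on l in the renewal equation
  walks l a w = (\<Sum>j\<le>l. first_visit_walks j a * walks (l - j) w w).\<close>
lemma first_visit_walks_eqI:
  assumes "finite V" "w \<in> V" "finite V'" "w' \<in> V'" "a \<noteq> w" "a' \<noteq> w'"
    and to_w: "\<And>l. walks V E l a w = walks V' E' l a' w'"
    and w_to_w: "\<And>l. walks V E l w w = walks V' E' l w' w'"
  shows "first_visit_walks V E w l a = first_visit_walks V' E' w' l a'"
proof (induction l rule: less_induct)
  case (less l)
  show ?case
  proof (cases l)
    case 0
    then show ?thesis by simp
  next
    case (Suc m)
    have "walks V E l a w = (\<Sum>j\<le>l. first_visit_walks V E w j a * walks V E (l-j) w w)"
      using walks_first_visit_decomp[OF assms(1,2,5), of E l w]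
        walks_to_outside_eq_0[of w "V-{w}" a E l] assms(5) by simp
    then have renewal: "walks V E l a w
        = (\<Sum>j\<le>m. first_visit_walks V E w j a * walks V E (l-j) w w) + first_visit_walks V E w l a"
      using Suc by simp
    have "walks V' E' l a' w' = (\<Sum>j\<le>l. first_visit_walks V' E' w' j a' * walks V' E' (l-j) w' w')"
      using walks_first_visit_decomp[OF assms(3,4,6), of E' l w']
        walks_to_outside_eq_0[of w' "V'-{w'}" a' E' l] assms(6) by simp
    then have renewal': "walks V' E' l a' w'
        = (\<Sum>j\<le>m. first_visit_walks V' E' w' j a' * walks V' E' (l-j) w' w')
          + first_visit_walks V' E' w' l a'"
      using Suc by simp
    have "(\<Sum>j\<le>m. first_visit_walks V E w j a * walks V E (l-j) w w)
        = (\<Sum>j\<le>m. first_visit_walks V' E' w' j a' * walks V' E' (l-j) w' w')"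
      using less.IH Suc w_to_w by (intro sum.cong) auto
    then show ?thesis
      using renewal renewal' to_w[of l] by simp
  qed
qed

lemma walks_avoiding_eqI:
  assumes "finite V" "w \<in> V" "finite V'" "w' \<in> V'" "a \<noteq> w" "a' \<noteq> w'"
    and "\<And>l. walks V E l a b = walks V' E' l a' b'"
    and "\<And>l. walks V E l a w = walks V' E' l a' w'"
    and "\<And>l. walks V E l w w = walks V' E' l w' w'"
    and "\<And>l. walks V E l w b = walks V' E' l w' b'"
  shows "walks (V-{w}) E l a b = walks (V'-{w'}) E' l a' b'"
  using walks_first_visit_decomp[OF assms(1,2,5), of E l b]
    walks_first_visit_decomp[OF assms(3,4,6), of E' l b']
    first_visit_walks_eqI[OF assms(1-6,8,9)] assms(7,10)
  by simp

lemma rtranclp_induced_iff_walks: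
  assumes "finite S" "a \<in> S"
  shows "(\<lambda>u v. E u v \<and> u \<in> S \<and> v \<in> S)\<^sup>*\<^sup>* a b \<longleftrightarrow> (\<exists>l. walks S E l a b > 0)"
proof
  assume "(\<lambda>u v. E u v \<and> u \<in> S \<and> v \<in> S)\<^sup>*\<^sup>* a b"
  then show "\<exists>l. walks S E l a b > 0"
  proof (induction rule: converse_rtranclp_induct)
    case base
    show ?case by (rule exI[of _ 0]) simp
  next
    case (step y z)
    then obtain l where l: "walks S E l z b > 0" by blast
    have "(if E y z then walks S E l z b else 0) \<le> walks S E (Suc l) y b"
      unfolding walks.simps using step(1) assms(1) by (intro member_le_sum) auto
    then show ?case
      using l step(1) by (intro exI[of _ "Suc l"]) simp
  qed
next
  assume "\<exists>l. walks S E l a b > 0"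
  then obtain l where "walks S E l a b > 0" by blast
  then show "(\<lambda>u v. E u v \<and> u \<in> S \<and> v \<in> S)\<^sup>*\<^sup>* a b"
    using assms(2)
  proof (induction l arbitrary: a)
    case 0
    then show ?case by (simp split: if_splits)
  next
    case (Suc l)
    have "(\<Sum>z\<in>S. if E a z then walks S E l z b else 0) \<noteq> 0"
      using Suc.prems(1) by simp
    then obtain z where "z \<in> S" "E a z" "walks S E l z b > 0"
      by (rule sum.not_neutral_contains_not_neutral) (auto split: if_splits)
    then show ?case
      using Suc by (auto intro: converse_rtranclp_into_rtranclp)
  qed
qed

definition wl_equiv ::
  "'a set \<Rightarrow> ('a \<Rightarrow> 'a \<Rightarrow> bool) \<Rightarrow> ('a \<Rightarrow> 'c) \<Rightarrow> 'a list
       \<Rightarrow> 'b set \<Rightarrow> ('b \<Rightarrow> 'b \<Rightarrow> bool) \<Rightarrow> ('b \<Rightarrow> 'c) \<Rightarrow> 'b list \<Rightarrow> bool" where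
  "wl_equiv V E c vs V' E' c' vs' \<longleftrightarrow> (\<forall>t. wl V E c t vs = wl V' E' c' t vs')"

lemma wl_eq_mono:
  assumes "wl V E c t vs = wl V' E' c' t vs'" "s \<le> t"
  shows "wl V E c s vs = wl V' E' c' s vs'"
  using assms
proof (induction t)
  case (Suc t)
  then show ?case by (cases "s = Suc t") (auto simp: le_Suc_eq)
qed simp

lemma wl_eq_imp_atomic_type:
  assumes "wl V E c t vs = wl V' E' c' t vs'" "i < length vs" "j < length vs"
  shows "length vs = length vs'" "vs!i = vs!j \<longleftrightarrow> vs'!i = vs'!j"
    "E (vs!i) (vs!j) \<longleftrightarrow> E' (vs'!i) (vs'!j)"
proof -
  have "wl V E c 0 vs = wl V' E' c' 0 vs'"
    using wl_eq_mono[OF assms(1), of 0] by blast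
  then have cols: "map c vs = map c' vs'"
    and atp: "map (\<lambda>x. map (\<lambda>y. (x = y, E x y)) vs) vs = map (\<lambda>x. map (\<lambda>y. (x = y, E' x y)) vs') vs'"
    by simp_all
  show len: "length vs = length vs'"
    using arg_cong[OF cols, of length] by simp
  from arg_cong[OF atp, of "\<lambda>M. M ! i ! j"] assms(2,3) len
  show "vs!i = vs!j \<longleftrightarrow> vs'!i = vs'!j" "E (vs!i) (vs!j) \<longleftrightarrow> E' (vs'!i) (vs'!j)"
    by simp_all
qed

lemma wl_Suc_eq_neighbour_multisets:
  assumes "wl V E c (Suc t) vs = wl V' E' c' (Suc t) vs'"
  shows "image_mset (\<lambda>z. map (\<lambda>i. wl V E c t (vs[i := z])) [0..<length vs]) (mset_set V)
       = image_mset (\<lambda>z. map (\<lambda>i. wl V' E' c' t (vs'[i := z])) [0..<length vs']) (mset_set V')"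
  using assms by simp

lemma map_upt_eq_nth_eq:
  assumes "map F [0..<n] = map F' [0..<n']" "i < n"
  shows "F i = F' i"
proof -
  have "n = n'"
    using arg_cong[OF assms(1), of length] by simp
  with assms have "map F [0..<n] ! i = map F' [0..<n] ! i"
    by simp
  with assms(2) show ?thesis
    by simp
qed

text \<open>The two sums agree because g, g' factor through f, f' via one common function.\<close>
lemma sum_eq_if_image_mset_eq:
  assumes "finite A" "finite B"
    and fibres: "image_mset f (mset_set A) = image_mset f' (mset_set B)"
    and compat: "\<And>a b. a \<in> A \<Longrightarrow> b \<in> B \<Longrightarrow> f a = f' b \<Longrightarrow> g a = g' b"
  shows "sum g A = sum g' B"
proof -
  have images: "f ` A = f' ` B"
    using arg_cong[OF fibres, of set_mset] assms(1,2) by simp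
  define h where "h y = g (SOME a. a \<in> A \<and> f a = y)" for y
  have h_f': "h (f' b) = g' b" if "b \<in> B" for b
  proof -
    have "f' b \<in> f ` A"
      using images that by simp
    then obtain a where "f' b = f a" "a \<in> A"
      by (rule imageE)
    then have "\<exists>a. a \<in> A \<and> f a = f' b"
      by auto
    then have "(SOME a. a \<in> A \<and> f a = f' b) \<in> A \<and> f (SOME a. a \<in> A \<and> f a = f' b) = f' b"
      by (rule someI_ex)
    then show ?thesis
      unfolding h_def using compat that by blast
  qed
  have h_f: "h (f a) = g a" if "a \<in> A" for a
  proof -
    have "f a \<in> f' ` B"
      using images that by (simp flip: images)
    then obtain b where "f a = f' b" "b \<in> B"
      by (rule imageE)
    then show ?thesis
      using h_f'[of b] compat[of a b] that by simp
  qed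
  have "sum g A = sum (h \<circ> f) A"
    using h_f by simp
  also have "\<dots> = sum_mset (image_mset h (image_mset f (mset_set A)))"
    by (simp add: sum_unfold_sum_mset image_mset.compositionality comp_def)
  also have "\<dots> = sum_mset (image_mset h (image_mset f' (mset_set B)))"
    using fibres by simp
  also have "\<dots> = sum (h \<circ> f') B"
    by (simp add: sum_unfold_sum_mset image_mset.compositionality comp_def)
  also have "\<dots> = sum g' B"
    using h_f' by simp
  finally show ?thesis .
qed

text \<open>Round l already determines the walks of length l: a walk from vs!i is a neighbour z of
  vs!i followed by a walk from z, and both are read off the tuple vs[i := z] after l - 1
  rounds.\<close>
lemma walks_eq_if_wl_eq:
  assumes "finite V" "finite V'"
  shows "wl V E c l vs = wl V' E' c' l vs' \<Longrightarrow> i < length vs \<Longrightarrow> j < length vs \<Longrightarrow> i \<noteq> j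
     \<Longrightarrow> walks V E l (vs!i) (vs!j) = walks V' E' l (vs'!i) (vs'!j)"
proof (induction l arbitrary: vs vs' i j)
  case 0
  then show ?case
    using wl_eq_imp_atomic_type(2)[OF 0(1-3)] by simp
next
  case (Suc l)
  have len: "length vs = length vs'"
    using wl_eq_imp_atomic_type(1)[OF Suc.prems(1-3)] .
  show ?case
    unfolding walks.simps
  proof (rule sum_eq_if_image_mset_eq[OF assms wl_Suc_eq_neighbour_multisets[OF Suc.prems(1)]])
    fix z z'
    assume zz: "map (\<lambda>i. wl V E c l (vs[i := z])) [0..<length vs]
        = map (\<lambda>i. wl V' E' c' l (vs'[i := z'])) [0..<length vs']"
    have at_i: "wl V E c l (vs[i := z]) = wl V' E' c' l (vs'[i := z'])"
      using map_upt_eq_nth_eq[OF zz, of i] Suc.prems by simp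
    have at_j: "wl V E c l (vs[j := z]) = wl V' E' c' l (vs'[j := z'])"
      using map_upt_eq_nth_eq[OF zz, of j] Suc.prems by simp
    have "walks V E l z (vs!j) = walks V' E' l z' (vs'!j)"
      using Suc.IH[OF at_i, of i j] Suc.prems len by simp
    moreover have "E (vs!i) z \<longleftrightarrow> E' (vs'!i) z'"
      using wl_eq_imp_atomic_type(3)[OF at_j, of i j] Suc.prems len by simp
    ultimately show "(if E (vs!i) z then walks V E l z (vs!j) else 0) =
          (if E' (vs'!i) z' then walks V' E' l z' (vs'!j) else 0)"
      by simp
  qed
qed

lemma wl_equiv_walks_eq:
  assumes "finite V" "finite V'" "wl_equiv V E c vs V' E' c' vs'"
    "i < length vs" "j < length vs" "i \<noteq> j"
  shows "walks V E l (vs!i) (vs!j) = walks V' E' l (vs'!i) (vs'!j)"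
  using walks_eq_if_wl_eq[OF assms(1,2), of E c l vs E' c' vs'] assms(3-6)
  unfolding wl_equiv_def by blast

lemma wl_equiv_eq_iff:
  assumes "wl_equiv V E c vs V' E' c' vs'" "i < length vs" "j < length vs"
  shows "vs!i = vs!j \<longleftrightarrow> vs'!i = vs'!j"
  using assms(1) wl_eq_imp_atomic_type(2)[OF _ assms(2,3)] unfolding wl_equiv_def by blast

text \<open>A single vertex z works for all rounds: an answer for round t also answers all
  earlier rounds, and V is finite.\<close>
lemma wl_equiv_extend:
  assumes "finite V" "finite V'" "wl_equiv V E c vs V' E' c' vs'" "z' \<in> V'"
  obtains z where "z \<in> V"
    "\<And>m. m < length vs \<Longrightarrow> wl_equiv V E c (vs[m := z]) V' E' c' (vs'[m := z'])"
proof -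
  define answers where "answers t z \<longleftrightarrow>
    (\<forall>m<length vs. wl V E c t (vs[m := z]) = wl V' E' c' t (vs'[m := z']))" for t z
  have exists: "\<exists>z\<in>V. answers t z" for t
  proof -
    let ?row = "\<lambda>z. map (\<lambda>i. wl V E c t (vs[i := z])) [0..<length vs]"
    let ?row' = "\<lambda>z. map (\<lambda>i. wl V' E' c' t (vs'[i := z])) [0..<length vs']"
    have "wl V E c (Suc t) vs = wl V' E' c' (Suc t) vs'"
      using assms(3) unfolding wl_equiv_def by blast
    from arg_cong[OF wl_Suc_eq_neighbour_multisets[OF this], of set_mset]
    have "?row ` V = ?row' ` V'"
      using assms(1,2) by (simp only: set_image_mset finite_set_mset_mset_set)
    then have "?row' z' \<in> ?row ` V"
      using assms(4) by blast
    then obtain z where rows: "?row' z' = ?row z" and "z \<in> V"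
      by (rule imageE)
    have "answers t z"
      unfolding answers_def using map_upt_eq_nth_eq[OF rows[symmetric]] by simp
    with \<open>z \<in> V\<close> show ?thesis
      by blast
  qed
  have antimono: "answers s z" if "answers t z" "s \<le> t" for s t z
    using that(1) wl_eq_mono[OF _ that(2)] unfolding answers_def by blast
  have "\<exists>z\<in>V. \<forall>t. answers t z"
  proof (rule ccontr)
    assume "\<not> ?thesis"
    then have "\<forall>z\<in>V. \<exists>t. \<not> answers t z" by blast
    from bchoice[OF this] obtain T where T: "\<forall>z\<in>V. \<not> answers (T z) z"
      by blast
    obtain z where z: "z \<in> V" "answers (Max (T ` V)) z"
      using exists by blast
    moreover have "T z \<le> Max (T ` V)"
      using assms(1) z(1) by simp
    ultimately have "answers (T z) z"
      using antimono by blast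
    with T z(1) show False by blast
  qed
  then obtain z where z: "z \<in> V" "\<forall>t. answers t z" by blast
  show ?thesis
  proof (rule that[OF z(1)])
    fix m
    assume "m < length vs"
    then show "wl_equiv V E c (vs[m := z]) V' E' c' (vs'[m := z'])"
      using z(2) unfolding answers_def wl_equiv_def by blast
  qed
qed

lemma card_eq_if_wl_Suc_eq:
  assumes "finite V" "finite V'" "wl V E c (Suc t) vs = wl V' E' c' (Suc t) vs'"
  shows "card V = card V'"
  using arg_cong[OF wl_Suc_eq_neighbour_multisets[OF assms(3)], of size] assms(1,2) by simp

lemma same_wl_vertex_color_walk_partners:
  assumes "2 \<le> k" "finite V" "finite V'" "same_wl_vertex_color k V E c w V' E' c' w'"
    "p \<in> V'" "q \<in> V'"
  obtains y x where "y \<in> V" "x \<in> V" "y = w \<longleftrightarrow> p = w'" "x = w \<longleftrightarrow> q = w'"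
    "\<And>l. walks V E l y x = walks V' E' l p q"
    "\<And>l. walks V E l y w = walks V' E' l p w'"
    "\<And>l. walks V E l w w = walks V' E' l w' w'"
    "\<And>l. walks V E l w x = walks V' E' l w' q"
proof -
  define r r' where "r = replicate k w" and "r' = replicate k w'"
  have r: "wl_equiv V E c r V' E' c' r'"
    using assms(4) unfolding r_def r'_def same_wl_vertex_color_def wl_equiv_def .
  obtain x where x: "x \<in> V" "\<And>m. m < k \<Longrightarrow> wl_equiv V E c (r[m := x]) V' E' c' (r'[m := q])"
    using wl_equiv_extend[OF assms(2,3) r assms(6)] unfolding r_def by auto
  define s s' where "s = r[1 := x]" and "s' = r'[1 := q]"
  have s: "wl_equiv V E c s V' E' c' s'"
    using x(2)[of 1] assms(1) unfolding s_def s'_def by simp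
  obtain y where y: "y \<in> V" "\<And>m. m < k \<Longrightarrow> wl_equiv V E c (s[m := y]) V' E' c' (s'[m := p])"
    using wl_equiv_extend[OF assms(2,3) s assms(5)] unfolding s_def r_def by auto
  have yx: "wl_equiv V E c (s[0 := y]) V' E' c' (s'[0 := p])"
    and yw: "wl_equiv V E c (r[1 := y]) V' E' c' (r'[1 := p])"
    using y(2)[of 0] y(2)[of 1] assms(1) unfolding s_def s'_def by simp_all
  have k: "0 < k" "1 < k"
    using assms(1) by simp_all
  show ?thesis
  proof (rule that[OF y(1) x(1)])
    show "y = w \<longleftrightarrow> p = w'"
      using wl_equiv_eq_iff[OF yw, of 1 0] k unfolding r_def r'_def by auto
    show "x = w \<longleftrightarrow> q = w'"
      using wl_equiv_eq_iff[OF s, of 1 0] k unfolding s_def s'_def r_def r'_def by auto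
    show "walks V E l y x = walks V' E' l p q" for l
      using wl_equiv_walks_eq[OF assms(2,3) yx, of 0 1] k unfolding s_def s'_def r_def r'_def by simp
    show "walks V E l y w = walks V' E' l p w'" for l
      using wl_equiv_walks_eq[OF assms(2,3) yw, of 1 0] k unfolding r_def r'_def by simp
    show "walks V E l w w = walks V' E' l w' w'" for l
      using wl_equiv_walks_eq[OF assms(2,3) r, of 0 1] k unfolding r_def r'_def by simp
    show "walks V E l w x = walks V' E' l w' q" for l
      using wl_equiv_walks_eq[OF assms(2,3) s, of 0 1] k unfolding s_def s'_def r_def r'_def by simp
  qed
qed

theorem corollary7:
  fixes k :: nat
    and V :: "'a set" and E :: "'a \<Rightarrow> 'a \<Rightarrow> bool" and col :: "'a \<Rightarrow> 'c" and w :: 'a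
    and V' :: "'b set" and E' :: "'b \<Rightarrow> 'b \<Rightarrow> bool" and col' :: "'b \<Rightarrow> 'c" and w' :: 'b
  assumes "k \<ge> 2"
    and "simple_graph V E" and "simple_graph V' E'"
    and "connected_on V E" and "connected_on V' E'"
    and "w \<in> V" and "w' \<in> V'"
    and "connected_on (V - {w}) E"
    and "\<not> connected_on (V' - {w'}) E'"
  shows "\<not> same_wl_vertex_color k V E col w V' E' col' w'"
proof
  assume same: "same_wl_vertex_color k V E col w V' E' col' w'"
  have fin: "finite V" "finite V'"
    using assms(2,3) by (simp_all add: simple_graph_def)
  show False
  proof (cases "V' - {w'} = {}")
    case True
    obtain u where u: "u \<in> V - {w}"
      using assms(8) by (auto simp: connected_on_def)
    have "card {u, w} \<le> card V"
      using u assms(6) fin(1) by (intro card_mono) auto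
    moreover have "V' = {w'}"
      using True assms(7) by blast
    ultimately have "card V \<noteq> card V'"
      using u by auto
    then show False
      using card_eq_if_wl_Suc_eq[OF fin] same unfolding same_wl_vertex_color_def by blast
  next
    case False
    then obtain p q where pq: "p \<in> V' - {w'}" "q \<in> V' - {w'}"
      and unreachable: "\<not> (\<lambda>u v. E' u v \<and> u \<in> V' - {w'} \<and> v \<in> V' - {w'})\<^sup>*\<^sup>* p q"
      using assms(9) unfolding connected_on_def by blast
    obtain y x where "y \<in> V" "x \<in> V" "y = w \<longleftrightarrow> p = w'" "x = w \<longleftrightarrow> q = w'"
      and walks_yx: "\<And>l. walks V E l y x = walks V' E' l p q"
      and walks_yw: "\<And>l. walks V E l y w = walks V' E' l p w'"
      and walks_ww: "\<And>l. walks V E l w w = walks V' E' l w' w'"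
      and walks_wx: "\<And>l. walks V E l w x = walks V' E' l w' q"
      using pq by (auto intro: same_wl_vertex_color_walk_partners[OF assms(1) fin same])
    then have yx: "y \<in> V - {w}" "x \<in> V - {w}"
      using pq by auto
    have avoiding: "walks (V - {w}) E l y x = walks (V' - {w'}) E' l p q" for l
      using walks_avoiding_eqI[OF fin(1) assms(6) fin(2) assms(7) _ _ walks_yx walks_yw walks_ww walks_wx]
        yx pq by blast
    have "(\<lambda>u v. E u v \<and> u \<in> V - {w} \<and> v \<in> V - {w})\<^sup>*\<^sup>* y x"
      using assms(8) yx unfolding connected_on_def by blast
    then obtain l where "walks (V - {w}) E l y x > 0"
      using rtranclp_induced_iff_walks[of "V - {w}" y E x] yx(1) fin(1) by blast
    then have "(\<lambda>u v. E' u v \<and> u \<in> V' - {w'} \<and> v \<in> V' - {w'})\<^sup>*\<^sup>* p q"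
      using rtranclp_induced_iff_walks[of "V' - {w'}" p E' q] pq(1) fin(2) avoiding by auto
    with unreachable show False ..
  qed
qed

end
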